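(* Let $f$ be a non-negative, non-increasing differentiable function on an interval $[0,X]$ with a monotone hazard rate, i.e. $\frac{f(x)}{|f'(x)|}$ is non-increasing. If $\tilde x>0$ satisfies $\frac{f(\tilde x)}{|f'(\tilde x)|}>\tilde x$, then $f(0)<e\,f(\tilde x)$. *)

theory Defs
  imports "HOL-Analysis.Analysis"
begin

text \<open>The ratio f(x)/|f'(x)| (reciprocal hazard rate), with values in the extended reals:
  where f x = 0 the hazard rate |f'|/f is infinite, so the ratio is 0; where f x > 0 but
  f' x = 0 the ratio is +infinity.\<close>
definition inv_hazard :: "(real \<Rightarrow> real) \<Rightarrow> (real \<Rightarrow> real) \<Rightarrow> real \<Rightarrow> ereal" where
  "inv_hazard f f' x =
     (if f x = 0 then 0 else if f' x = 0 then \<infinity> else ereal (f x / \<bar>f' x\<bar>))"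

end

theory Submission
  imports Defs
begin

text \<open>On \<open>[0, x\<^sub>t]\<close> the monotone hazard rate gives \<open>f x / |f' x| \<ge> f x\<^sub>t / |f' x\<^sub>t| > x\<^sub>t\<close>,
  i.e. \<open>x\<^sub>t f' + f > 0\<close>. This is exactly positivity of the derivative of \<open>f(x) e^{x/x\<^sub>t}\<close>,
  which is therefore strictly increasing, so \<open>f(0) < f(x\<^sub>t) e\<close>.\<close>

lemma inv_hazard_gt_imp_pos:
  fixes f f' :: "real \<Rightarrow> real" and c x :: real
  assumes "ereal c < inv_hazard f f' x" "0 \<le> c" "0 \<le> f x"
  shows "0 < c * f' x + f x"
proof -
  have "f x \<noteq> 0"
    using assms(1,2) by (auto simp: inv_hazard_def zero_ereal_def)
  with assms(3) have fpos: "0 < f x" by simp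
  show ?thesis
  proof (cases "f' x = 0")
    case True
    with fpos show ?thesis by simp
  next
    case False
    with assms(1) \<open>f x \<noteq> 0\<close> have "c < f x / \<bar>f' x\<bar>"
      by (simp add: inv_hazard_def)
    with False have "c * \<bar>f' x\<bar> < f x"
      by (simp add: field_simps)
    moreover have "- (c * f' x) \<le> c * \<bar>f' x\<bar>"
      using mult_left_mono[OF abs_ge_minus_self assms(2)] by simp
    ultimately show ?thesis by linarith
  qed
qed

lemma mult_exp_div_strict_increasing:
  fixes f f' :: "real \<Rightarrow> real" and a b c :: real
  assumes "a < b" "0 < c"
    and cont: "continuous_on {a..b} f"
    and deriv: "\<And>x. a < x \<Longrightarrow> x < b \<Longrightarrow> (f has_real_derivative f' x) (at x)"
    and pos: "\<And>x. a < x \<Longrightarrow> x < b \<Longrightarrow> 0 < c * f' x + f x"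
  shows "f a * exp (a / c) < f b * exp (b / c)"
proof (rule DERIV_pos_imp_increasing_open[OF \<open>a < b\<close>])
  fix x assume x: "a < x" "x < b"
  have "((\<lambda>x. f x * exp (x / c)) has_real_derivative
          (c * f' x + f x) / c * exp (x / c)) (at x)"
    using \<open>0 < c\<close>
    by (auto intro!: derivative_eq_intros deriv[OF x] simp: field_simps)
  moreover have "0 < (c * f' x + f x) / c * exp (x / c)"
    using pos[OF x] \<open>0 < c\<close> by simp
  ultimately show "\<exists>y. ((\<lambda>x. f x * exp (x / c)) has_real_derivative y) (at x) \<and> 0 < y"
    by blast
qed (use \<open>0 < c\<close> in \<open>auto intro!: continuous_intros cont\<close>)

theorem lemma20:
  fixes f f' :: "real \<Rightarrow> real" and X xt :: real
  assumes deriv: "\<And>x. x \<in> {0..X} \<Longrightarrow> (f has_real_derivative f' x) (at x within {0..X})"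
    and nonneg: "\<And>x. x \<in> {0..X} \<Longrightarrow> f x \<ge> 0"
    and noninc: "\<And>x y. x \<in> {0..X} \<Longrightarrow> y \<in> {0..X} \<Longrightarrow> x \<le> y \<Longrightarrow> f y \<le> f x"
    and mhr: "\<And>x y. x \<in> {0..X} \<Longrightarrow> y \<in> {0..X} \<Longrightarrow> x \<le> y \<Longrightarrow>
                inv_hazard f f' y \<le> inv_hazard f f' x"
    and xt: "0 < xt" "xt \<le> X"
    and big: "inv_hazard f f' xt > ereal xt"
  shows "f 0 < exp 1 * f xt"
proof -
  have "continuous_on {0..X} f"
    by (rule DERIV_continuous_on[OF deriv])
  then have "continuous_on {0..xt} f"
    by (rule continuous_on_subset) (use xt in auto)
  moreover have "(f has_real_derivative f' x) (at x)" if "0 < x" "x < xt" for x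
    using deriv[of x] that xt
    by (auto simp: has_field_derivative_def at_within_Icc_at)
  moreover have "0 < xt * f' x + f x" if "0 < x" "x < xt" for x
  proof (rule inv_hazard_gt_imp_pos[where f = f and f' = f'])
    show "ereal xt < inv_hazard f f' x"
      using less_le_trans[OF big mhr[of x xt]] that xt by simp
  qed (use that xt nonneg in auto)
  ultimately have "f 0 * exp (0 / xt) < f xt * exp (xt / xt)"
    by (rule mult_exp_div_strict_increasing[OF xt(1) xt(1)])
  with xt show ?thesis by (simp add: mult.commute)
qed

end
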